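(* Let $s\in\mathbb N$, let $c_s>0$ be a constant, and for $m\in\mathbb N$ let $N_m=\sup\{N\in\mathbb N_0:|Q_N|\le c_sm2^m\}$. Under the complete random design, $$\Pr\Big(\sum_{\boldsymbol k\in Q_{N_m}}Z(\boldsymbol k)\ge2c_sm\Big)\le\frac1{c_sm}.$$
   Context: For $k\in\mathbb N_0$, $k=\sum_{\ell\ge1}a_\ell2^{\ell-1}$ with $a_\ell\in\{0,1\}$, let $\kappa=\{\ell:a_\ell=1\}$. For $\boldsymbol k\in\mathbb N_0^s$ with digit sets $\kappa_1,\dots,\kappa_s$, $\|\boldsymbol\kappa\|_1=\sum_j\sum_{\ell\in\kappa_j}\ell$; $Q_N=\{\boldsymbol k\in\mathbb N_0^s\setminus\{\boldsymbol0\}:\|\boldsymbol\kappa\|_1\le N\}$. Complete random design: random matrices $C_j\in\{0,1\}^{\infty\times m}$ ($j=1,\dots,s$) with all entries i.i.d. uniform on $\{0,1\}$; $Z(\boldsymbol k)=\mathbf 1\{\sum_j\sum_{\ell\in\kappa_j}C_j(\ell,:)=\boldsymbol0\bmod2\}$. *)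

theory Defs
  imports "HOL-Probability.Probability"
begin

text \<open>Digit set kappa of k = sum a_l 2^(l-1): positions l >= 1 with a_l = 1.\<close>
definition digit_set :: "nat \<Rightarrow> nat set" where
  "digit_set k = {l. 1 \<le> l \<and> bit k (l - 1)}"

text \<open>Vectors k in N_0^s are functions nat => nat vanishing outside {0..<s}
  (coordinate j = 1..s of the paper is index j-1 here).\<close>
definition kappa_norm :: "nat \<Rightarrow> (nat \<Rightarrow> nat) \<Rightarrow> nat" where
  "kappa_norm s k = (\<Sum>j<s. \<Sum>l\<in>digit_set (k j). l)"

definition QN :: "nat \<Rightarrow> nat \<Rightarrow> (nat \<Rightarrow> nat) set" where
  "QN s N = {k. (\<forall>j\<ge>s. k j = 0) \<and> k \<noteq> (\<lambda>_. 0) \<and> kappa_norm s k \<le> N}"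

definition Nm :: "nat \<Rightarrow> real \<Rightarrow> nat \<Rightarrow> nat" where
  "Nm s c m = Sup {N. real (card (QN s N)) \<le> c * real m * 2 ^ m}"

text \<open>Complete random design: entry (j, l, col) is C_j(l, col); all entries
  i.i.d. uniform on {0,1} (True = 1).  Unused indices are extra independent coins.\<close>
definition random_design :: "(nat \<times> nat \<times> nat \<Rightarrow> bool) measure" where
  "random_design = PiM UNIV (\<lambda>_. measure_pmf (bernoulli_pmf (1/2)))"

definition Zind :: "nat \<Rightarrow> nat \<Rightarrow> (nat \<Rightarrow> nat) \<Rightarrow> (nat \<times> nat \<times> nat \<Rightarrow> bool) \<Rightarrow> bool" where
  "Zind s m k C = (\<forall>col<m. even (\<Sum>j<s. \<Sum>l\<in>digit_set (k j). of_bool (C (j, l, col)) :: nat))"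

end

theory Submission
  imports Defs
begin

text \<open>Let \<open>R(k)\<close> be the set of pairs \<open>(j, \<ell>)\<close> with \<open>\<ell> \<in> \<kappa>\<^sub>j\<close>, and let
  \<open>\<chi>\<^sub>A(C) = (-1)\<^bsup>|{x \<in> A. C x}|\<^esup>\<close> be the \<open>\<plusminus>1\<close> characters of the fair coins \<open>C\<close>. Each column condition of \<open>Z(k)\<close> has indicator
  \<open>(1 + \<chi>)/2\<close>, so \<open>Z(k) = 2\<^sup>-\<^sup>m \<Sum>\<^sub>T \<chi>\<^bsub>R(k) \<times> T\<^esub>\<close> over the sets \<open>T\<close> of columns. Characters are
  orthonormal, and for distinct nonzero \<open>k, k'\<close> the sets \<open>R(k) \<times> T\<close> and \<open>R(k') \<times> T'\<close> coincide
  only when \<open>T = T' = {}\<close>. Hence \<open>Pr(Z(k)) = 2\<^sup>-\<^sup>m\<close> and the events \<open>Z(k)\<close> are pairwise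
  independent, so their number \<open>X\<close> over \<open>Q\<^bsub>N\<^sub>m\<^esub>\<close> has mean and variance at most
  \<open>|Q\<^bsub>N\<^sub>m\<^esub>| 2\<^sup>-\<^sup>m \<le> c m\<close>. Chebyshev's inequality then gives
  \<open>Pr(X \<ge> 2 c m) \<le> Pr(|X - E X| \<ge> c m) \<le> 1/(c m)\<close>.\<close>

section \<open>Characters of fair coins\<close>

abbreviation fair_coin :: "bool measure" where
  "fair_coin \<equiv> measure_pmf (bernoulli_pmf (1/2))"

definition fair_coins :: "('a \<Rightarrow> bool) measure" where
  "fair_coins = PiM UNIV (\<lambda>_. fair_coin)"

lemma random_design_eq_fair_coins: "random_design = fair_coins"
  by (simp add: random_design_def fair_coins_def)

lemma product_prob_space_fair_coin: "product_prob_space (\<lambda>_::'a. fair_coin)"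
  by (intro product_prob_spaceI) (simp add: measure_pmf.prob_space_axioms)

lemma prob_space_fair_coins: "prob_space fair_coins"
  unfolding fair_coins_def by (intro prob_space_PiM) (simp add: measure_pmf.prob_space_axioms)

lemma prob_space_random_design: "prob_space random_design"
  unfolding random_design_eq_fair_coins by (rule prob_space_fair_coins)

definition coin_char :: "'a set \<Rightarrow> ('a \<Rightarrow> bool) \<Rightarrow> real" where
  "coin_char A C = (\<Prod>x\<in>A. if C x then -1 else 1)"

lemma coin_char_eq_power: "coin_char A C = (-1) ^ (\<Sum>x\<in>A. of_bool (C x) :: nat)"
  unfolding coin_char_def power_sum by (intro prod.cong) auto

lemma abs_coin_char_le: "\<bar>coin_char A C\<bar> \<le> 1"
  by (simp add: coin_char_def abs_prod prod_le_1)

lemma coin_char_UN_disjoint: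
  assumes "finite T" "\<And>i. i \<in> T \<Longrightarrow> finite (A i)" "disjoint_family_on A T"
  shows "coin_char (\<Union>i\<in>T. A i) C = (\<Prod>i\<in>T. coin_char (A i) C)"
  unfolding coin_char_def using assms
  by (intro prod.UNION_disjoint) (auto simp: disjoint_family_on_def)

lemma coin_char_mult:
  assumes "finite A" "finite B"
  shows "coin_char A C * coin_char B C = coin_char (sym_diff A B) C"
proof -
  have split: "coin_char X C = coin_char (X - Y) C * coin_char (X \<inter> Y) C" if "finite X" for X Y
    unfolding coin_char_def using that by (subst prod.union_disjoint [symmetric]) (auto intro: prod.cong)
  have square: "coin_char (A \<inter> B) C * coin_char (A \<inter> B) C = 1"
    unfolding coin_char_def prod.distrib [symmetric] by (rule prod.neutral) auto
  have "coin_char (sym_diff A B) C = coin_char (A - B) C * coin_char (B - A) C"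
    unfolding coin_char_def using assms by (intro prod.union_disjoint) auto
  with split [OF assms(1), of B] split [OF assms(2), of A] square show ?thesis
    by (simp add: Int_commute algebra_simps)
qed

lemma coin_char_measurable [measurable]: "coin_char A \<in> borel_measurable fair_coins"
  unfolding coin_char_def fair_coins_def by measurable

lemma integrable_coin_char [simp]: "integrable fair_coins (coin_char A)"
  using prob_space.finite_measure [OF prob_space_fair_coins] abs_coin_char_le
  by (intro finite_measure.integrable_const_bound [where B = 1]) auto

text \<open>Only the finitely many coins in \<open>A\<close> matter, and these are independent
  with mean \<open>0\<close> after the sign change \<open>b \<mapsto> (-1)^b\<close>.\<close>
lemma integral_coin_char:
  assumes "finite A"
  shows "integral\<^sup>L fair_coins (coin_char A) = of_bool (A = {})"
proof -
  interpret coins: product_prob_space "\<lambda>_. fair_coin" UNIV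
    by (rule product_prob_space_fair_coin)
  let ?sign = "\<lambda>b. if b then -1 else 1 :: real"
  have restrict: "distr fair_coins (PiM A (\<lambda>_. fair_coin)) (\<lambda>C. restrict C A) = PiM A (\<lambda>_. fair_coin)"
    unfolding fair_coins_def using assms by (intro coins.distr_PiM_restrict_finite) auto
  have "integral\<^sup>L fair_coins (coin_char A)
      = integral\<^sup>L fair_coins (\<lambda>C. (\<lambda>D. \<Prod>x\<in>A. ?sign (D x)) (restrict C A))"
    unfolding coin_char_def by (intro Bochner_Integration.integral_cong) auto
  also have "\<dots> = integral\<^sup>L (distr fair_coins (PiM A (\<lambda>_. fair_coin)) (\<lambda>C. restrict C A))
                        (\<lambda>D. \<Prod>x\<in>A. ?sign (D x))"
    unfolding fair_coins_def
    by (rule integral_distr [symmetric, OF measurable_restrict_subset]) (simp, measurable)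
  also have "\<dots> = (\<Prod>x\<in>A. integral\<^sup>L fair_coin ?sign)"
    unfolding restrict
    by (rule product_sigma_finite.product_integral_prod [OF _ assms])
       (auto intro: product_prob_space.axioms(1) [OF product_prob_space_fair_coin]
             intro!: integrable_measure_pmf_finite)
  also have "\<dots> = of_bool (A = {})"
    using assms by (simp add: card_gt_0_iff)
  finally show ?thesis .
qed

section \<open>Counting pairwise independent events\<close>

lemma (in prob_space) expectation_of_bool:
  assumes "Measurable.pred M P"
  shows "expectation (\<lambda>x. of_bool (P x)) = prob {x \<in> space M. P x}"
proof -
  have "expectation (\<lambda>x. of_bool (P x)) = expectation (indicator {x \<in> space M. P x})"
    by (intro Bochner_Integration.integral_cong) (auto simp: indicator_def)
  also have "\<dots> = prob {x \<in> space M. P x}"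
    by (simp add: Int_absorb2)
  finally show ?thesis .
qed

lemma (in prob_space) pairwise_independent_count_tail:
  fixes P :: "'i \<Rightarrow> 'a \<Rightarrow> bool"
  assumes "finite K"
    and [measurable]: "\<And>k. Measurable.pred M (P k)"
    and prob_single: "\<And>k. k \<in> K \<Longrightarrow> prob {x \<in> space M. P k x} = p"
    and prob_pair: "\<And>k k'. k \<in> K \<Longrightarrow> k' \<in> K \<Longrightarrow> k \<noteq> k' \<Longrightarrow>
                      prob {x \<in> space M. P k x \<and> P k' x} = p\<^sup>2"
    and mean_le: "real (card K) * p \<le> t" and "0 < t"
  shows "prob {x \<in> space M. 2 * t \<le> real (\<Sum>k\<in>K. of_bool (P k x))} \<le> 1 / t"
proof -
  define X where "X x = (\<Sum>k\<in>K. of_bool (P k x) :: real)" for x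
  have [measurable]: "X \<in> borel_measurable M"
    unfolding X_def by measurable
  have "0 \<le> X x" "X x \<le> real (card K)" for x
    unfolding X_def using sum_bounded_above [of K "\<lambda>k. of_bool (P k x) :: real" 1]
    by (auto intro: sum_nonneg)
  then have "\<bar>(X x)\<^sup>2\<bar> \<le> real (card K) ^ 2" for x
    by (simp add: power_mono)
  then have X_square_integrable: "integrable M (\<lambda>x. (X x)\<^sup>2)"
    by (intro integrable_const_bound [where B = "real (card K) ^ 2"]) simp_all
  have integrable_of_bool: "integrable M (\<lambda>x. of_bool (Q x) :: real)"
    if [measurable]: "Measurable.pred M Q" for Q
    by (intro integrable_const_bound [where B = 1]) simp_all
  have prob_both: "prob {x \<in> space M. P k x \<and> P k' x} = (if k = k' then p else p\<^sup>2)"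
    if "k \<in> K" "k' \<in> K" for k k'
    using that prob_single prob_pair by auto
  have mean: "expectation X = real (card K) * p"
    unfolding X_def using prob_single
    by (simp add: Bochner_Integration.integral_sum integrable_of_bool expectation_of_bool)
  have "(X x)\<^sup>2 = (\<Sum>k\<in>K. \<Sum>k'\<in>K. of_bool (P k x \<and> P k' x))" for x
    by (simp only: X_def power2_eq_square sum_product of_bool_conj)
  then have "expectation (\<lambda>x. (X x)\<^sup>2)
      = (\<Sum>k\<in>K. \<Sum>k'\<in>K. expectation (\<lambda>x. of_bool (P k x \<and> P k' x)))"
    by (simp add: Bochner_Integration.integral_sum Bochner_Integration.integrable_sum
      integrable_of_bool)
  also have "\<dots> = (\<Sum>k\<in>K. \<Sum>k'\<in>K. p\<^sup>2 + (if k = k' then p - p\<^sup>2 else 0))"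
    by (intro sum.cong refl) (simp add: expectation_of_bool prob_both)
  also have "\<dots> = real (card K) * (real (card K) * p\<^sup>2 + (p - p\<^sup>2))"
    using \<open>finite K\<close> by (simp add: sum.distrib)
  finally have second_moment:
    "expectation (\<lambda>x. (X x)\<^sup>2) = real (card K) * (real (card K) * p\<^sup>2 + (p - p\<^sup>2))" .
  have "variance X = expectation (\<lambda>x. (X x)\<^sup>2) - (expectation X)\<^sup>2"
    using X_square_integrable square_integrable_imp_integrable [OF _ X_square_integrable]
    by (intro variance_eq) simp_all
  also have "\<dots> = real (card K) * p - real (card K) * p\<^sup>2"
    unfolding second_moment mean by (simp add: algebra_simps power2_eq_square)
  also have "\<dots> \<le> t"
    using mean_le mult_nonneg_nonneg [OF of_nat_0_le_iff zero_le_power2, of "card K" p] by linarith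
  finally have variance_le: "variance X \<le> t" .
  have "prob {x \<in> space M. 2 * t \<le> real (\<Sum>k\<in>K. of_bool (P k x))}
      \<le> prob {x \<in> space M. t \<le> \<bar>X x - expectation X\<bar>}"
    using mean mean_le by (intro finite_measure_mono) (auto simp: X_def)
  also have "\<dots> \<le> variance X / t\<^sup>2"
    by (rule Chebyshev_inequality) (simp_all add: X_square_integrable \<open>0 < t\<close>)
  also have "\<dots> \<le> t / t\<^sup>2"
    using variance_le by (simp add: divide_right_mono)
  also have "\<dots> = 1 / t"
    by (simp add: power2_eq_square)
  finally show ?thesis .
qed

section \<open>Digit supports and cells of the design\<close>

lemma bit_imp_exp_le: "bit (k::nat) n \<Longrightarrow> 2 ^ n \<le> k"
  by (cases "k < 2 ^ n") (auto simp: bit_nat_def)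

lemma digit_set_subset: "digit_set k \<subseteq> {1..k}"
proof
  fix l assume "l \<in> digit_set k"
  then have "1 \<le> l" "2 ^ (l - 1) \<le> k"
    by (auto simp: digit_set_def bit_imp_exp_le)
  moreover have "l - 1 < 2 ^ (l - 1)"
    by (rule less_exp)
  ultimately have "l \<le> k"
    by linarith
  with \<open>1 \<le> l\<close> show "l \<in> {1..k}"
    by simp
qed

lemma finite_digit_set [simp]: "finite (digit_set k)"
  using digit_set_subset by (rule finite_subset) simp

lemma Suc_mem_digit_set_iff: "Suc n \<in> digit_set k \<longleftrightarrow> bit k n"
  by (simp add: digit_set_def)

lemma digit_set_eq_iff: "digit_set a = digit_set b \<longleftrightarrow> a = b"
  by (metis Suc_mem_digit_set_iff bit_eq_iff)

lemma digit_set_0 [simp]: "digit_set 0 = {}"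
  by (simp add: digit_set_def)

lemma digit_set_eq_empty_iff: "digit_set k = {} \<longleftrightarrow> k = 0"
  by (metis digit_set_0 digit_set_eq_iff)

lemma digit_set_exp: "digit_set (2 ^ i) = {Suc i}"
  by (auto simp: digit_set_def bit_exp_iff)

lemma less_exp_if_digits_le:
  assumes "\<And>l. l \<in> digit_set k \<Longrightarrow> l \<le> N"
  shows "k < 2 ^ N"
proof -
  have "n < N" if "bit k n" for n
    using assms [of "Suc n"] that by (simp add: Suc_mem_digit_set_iff)
  then have "take_bit N k = k"
    by (intro bit_eqI) (auto simp: bit_take_bit_iff)
  then show ?thesis
    by (simp add: take_bit_nat_eq_self_iff)
qed

definition digit_support :: "nat \<Rightarrow> (nat \<Rightarrow> nat) \<Rightarrow> (nat \<times> nat) set" where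
  "digit_support s k = (SIGMA j:{..<s}. digit_set (k j))"

lemma finite_digit_support [simp]: "finite (digit_support s k)"
  by (simp add: digit_support_def)

lemma kappa_norm_eq_sum_digit_support: "kappa_norm s k = (\<Sum>(j, l)\<in>digit_support s k. l)"
  by (simp add: kappa_norm_def digit_support_def sum.Sigma)

lemma digit_le_kappa_norm: "(j, l) \<in> digit_support s k \<Longrightarrow> l \<le> kappa_norm s k"
  using member_le_sum [where f = "\<lambda>(j, l). l" and i = "(j, l)" and A = "digit_support s k"]
  by (simp add: kappa_norm_eq_sum_digit_support)

lemma digit_support_eq_empty_iff:
  assumes "\<forall>j\<ge>s. k j = 0"
  shows "digit_support s k = {} \<longleftrightarrow> k = (\<lambda>_. 0)"
proof -
  have "digit_support s k = {} \<longleftrightarrow> (\<forall>j<s. k j = 0)"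
    by (auto simp: digit_support_def Sigma_empty_iff digit_set_eq_empty_iff)
  also have "\<dots> \<longleftrightarrow> (\<forall>j. k j = 0)"
    using assms not_less by blast
  finally show ?thesis
    by (simp add: fun_eq_iff)
qed

lemma digit_support_inject:
  assumes "\<forall>j\<ge>s. k j = 0" "\<forall>j\<ge>s. k' j = 0" "digit_support s k = digit_support s k'"
  shows "k = k'"
proof
  fix j
  show "k j = k' j"
  proof (cases "j < s")
    case True
    then have "digit_set (k j) = digit_set (k' j)"
      using assms(3) by (auto simp: digit_support_def set_eq_iff)
    then show ?thesis
      by (simp add: digit_set_eq_iff)
  qed (use assms in auto)
qed

definition column_cells :: "nat \<Rightarrow> (nat \<Rightarrow> nat) \<Rightarrow> nat \<Rightarrow> (nat \<times> nat \<times> nat) set" where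
  "column_cells s k col = (\<lambda>(j, l). (j, l, col)) ` digit_support s k"

definition cells :: "nat \<Rightarrow> (nat \<Rightarrow> nat) \<Rightarrow> nat set \<Rightarrow> (nat \<times> nat \<times> nat) set" where
  "cells s k T = (\<Union>col\<in>T. column_cells s k col)"

lemma finite_cells: "finite T \<Longrightarrow> finite (cells s k T)"
  by (simp add: cells_def column_cells_def)

lemma cells_eq_empty_iff: "cells s k T = {} \<longleftrightarrow> T = {} \<or> digit_support s k = {}"
  by (auto simp: cells_def column_cells_def)

lemma cells_eq_iff:
  assumes "digit_support s k \<noteq> {}" "digit_support s k' \<noteq> {}"
  shows "cells s k T = cells s k' T' \<longleftrightarrow> T = T' \<and> (T = {} \<or> digit_support s k = digit_support s k')"
proof -
  let ?assoc = "\<lambda>((j, l), col). (j, l, col) :: nat \<times> nat \<times> nat"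
  have cells_eq: "cells s k T = ?assoc ` (digit_support s k \<times> T)" for k T
    by (force simp: cells_def column_cells_def)
  have "inj ?assoc"
    by (auto simp: inj_def)
  then show ?thesis
    using assms by (auto simp: cells_eq inj_image_eq_iff times_eq_iff)
qed

lemma coin_char_column_cells:
  "coin_char (column_cells s k col) C = (-1) ^ (\<Sum>j<s. \<Sum>l\<in>digit_set (k j). of_bool (C (j, l, col)) :: nat)"
proof -
  have "inj_on (\<lambda>(j, l). (j, l, col)) (digit_support s k)"
    by (auto simp: inj_on_def)
  then have "coin_char (column_cells s k col) C
      = (-1) ^ (\<Sum>(j, l)\<in>digit_support s k. of_bool (C (j, l, col)) :: nat)"
    unfolding coin_char_eq_power column_cells_def by (simp only: sum.reindex comp_def case_prod_unfold)
  also have "(\<Sum>(j, l)\<in>digit_support s k. of_bool (C (j, l, col)) :: nat)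
      = (\<Sum>j<s. \<Sum>l\<in>digit_set (k j). of_bool (C (j, l, col)))"
    unfolding digit_support_def by (rule sum.Sigma [symmetric]) simp_all
  finally show ?thesis .
qed

lemma of_bool_Zind_eq:
  "of_bool (Zind s m k C) = (1/2) ^ m * (\<Sum>T\<in>Pow {..<m}. coin_char (cells s k T) C)"
proof -
  let ?chi = "\<lambda>col. coin_char (column_cells s k col) C"
  have of_bool_even: "of_bool (even n) = (1 + (-1) ^ n) / (2::real)" for n :: nat
    by (simp add: minus_one_power_iff)
  have of_bool_all_less: "of_bool (\<forall>i<n. P i) = (\<Prod>i<n. of_bool (P i) :: real)"
    for n :: nat and P
    by (induction n) (auto simp: lessThan_Suc less_Suc_eq)
  have "of_bool (Zind s m k C) = (\<Prod>col<m. of_bool (even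
      (\<Sum>j<s. \<Sum>l\<in>digit_set (k j). of_bool (C (j, l, col)) :: nat)) :: real)"
    unfolding Zind_def by (rule of_bool_all_less)
  also have "\<dots> = (\<Prod>col<m. (1 + ?chi col) / 2)"
    unfolding coin_char_column_cells of_bool_even ..
  also have "\<dots> = (1/2) ^ m * (\<Prod>col<m. ?chi col + 1)"
    by (simp add: prod_dividef add.commute power_one_over)
  also have "(\<Prod>col<m. ?chi col + 1) = (\<Sum>T\<in>Pow {..<m}. \<Prod>col\<in>T. ?chi col)"
    by (simp add: prod_add)
  also have "\<dots> = (\<Sum>T\<in>Pow {..<m}. coin_char (cells s k T) C)"
    unfolding cells_def
    by (intro sum.cong refl coin_char_UN_disjoint [symmetric])
       (auto simp: column_cells_def disjoint_family_on_def finite_subset)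
  finally show ?thesis .
qed

section \<open>Pairwise independence of the events \<open>Z(k)\<close>\<close>

lemma measurable_Zind [measurable]: "Measurable.pred random_design (Zind s m k)"
  unfolding Zind_def random_design_def by measurable

lemma prob_Zind:
  assumes "digit_support s k \<noteq> {}"
  shows "measure random_design {C \<in> space random_design. Zind s m k C} = (1/2) ^ m"
proof -
  interpret prob_space random_design
    by (rule prob_space_random_design)
  have "measure random_design {C \<in> space random_design. Zind s m k C}
      = expectation (\<lambda>C. of_bool (Zind s m k C))"
    by (simp add: expectation_of_bool)
  also have "\<dots> = (1/2) ^ m * (\<Sum>T\<in>Pow {..<m}. integral\<^sup>L fair_coins (coin_char (cells s k T)))"
    unfolding of_bool_Zind_eq random_design_eq_fair_coins by simp
  also have "(\<Sum>T\<in>Pow {..<m}. integral\<^sup>L fair_coins (coin_char (cells s k T)))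
      = (\<Sum>T\<in>Pow {..<m}. of_bool (T = {}))"
    using assms
    by (intro sum.cong refl) (auto simp: integral_coin_char finite_cells cells_eq_empty_iff finite_subset)
  also have "\<dots> = 1"
    by (simp add: of_bool_def sum.delta)
  finally show ?thesis
    by simp
qed

lemma prob_Zind_pair:
  assumes "digit_support s k \<noteq> {}" "digit_support s k' \<noteq> {}"
    and "digit_support s k \<noteq> digit_support s k'"
  shows "measure random_design {C \<in> space random_design. Zind s m k C \<and> Zind s m k' C} = ((1/2) ^ m)\<^sup>2"
proof -
  interpret prob_space random_design
    by (rule prob_space_random_design)
  let ?cells_diff = "\<lambda>T T'. sym_diff (cells s k T) (cells s k' T')"
  have finite_Pow: "T \<in> Pow {..<m} \<Longrightarrow> finite T" for T
    by (auto intro: finite_subset)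
  have expansion: "of_bool (Zind s m k C \<and> Zind s m k' C)
      = ((1/2) ^ m)\<^sup>2 * (\<Sum>T\<in>Pow {..<m}. \<Sum>T'\<in>Pow {..<m}. coin_char (?cells_diff T T') C)" for C
  proof -
    have "of_bool (Zind s m k C \<and> Zind s m k' C)
        = ((1/2) ^ m)\<^sup>2 * (\<Sum>T\<in>Pow {..<m}. \<Sum>T'\<in>Pow {..<m}. coin_char (cells s k T) C * coin_char (cells s k' T') C)"
      by (simp add: of_bool_conj of_bool_Zind_eq sum_product power2_eq_square)
    also have "\<dots> = ((1/2) ^ m)\<^sup>2 * (\<Sum>T\<in>Pow {..<m}. \<Sum>T'\<in>Pow {..<m}. coin_char (?cells_diff T T') C)"
      by (intro arg_cong2 [where f = "(*)"] sum.cong refl coin_char_mult finite_cells finite_Pow)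
    finally show ?thesis .
  qed
  have "measure random_design {C \<in> space random_design. Zind s m k C \<and> Zind s m k' C}
      = expectation (\<lambda>C. of_bool (Zind s m k C \<and> Zind s m k' C))"
    by (simp add: expectation_of_bool)
  also have "\<dots> = ((1/2) ^ m)\<^sup>2 *
      (\<Sum>T\<in>Pow {..<m}. \<Sum>T'\<in>Pow {..<m}. integral\<^sup>L fair_coins (coin_char (?cells_diff T T')))"
    unfolding expansion random_design_eq_fair_coins by simp
  also have "(\<Sum>T\<in>Pow {..<m}. \<Sum>T'\<in>Pow {..<m}. integral\<^sup>L fair_coins (coin_char (?cells_diff T T')))
      = (\<Sum>T\<in>Pow {..<m}. \<Sum>T'\<in>Pow {..<m}. if T = {} \<and> T' = {} then 1 else 0)"
  proof (intro sum.cong refl)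
    fix T T' assume "T \<in> Pow {..<m}" "T' \<in> Pow {..<m}"
    then have "finite (?cells_diff T T')"
      by (simp add: finite_cells finite_Pow)
    moreover have "?cells_diff T T' = {} \<longleftrightarrow> T = {} \<and> T' = {}"
      using assms cells_eq_iff [OF assms(1,2), of T T'] by auto
    ultimately show "integral\<^sup>L fair_coins (coin_char (?cells_diff T T'))
        = (if T = {} \<and> T' = {} then 1 else 0)"
      by (simp add: integral_coin_char)
  qed
  also have "\<dots> = (\<Sum>T\<in>Pow {..<m}. if T = {} then 1 else 0)"
  proof (intro sum.cong refl)
    fix T
    show "(\<Sum>T'\<in>Pow {..<m}. if T = {} \<and> T' = {} then 1 else 0) = (if T = {} then 1 else 0 :: real)"
      by (cases "T = {}") (simp_all add: sum.delta)
  qed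
  also have "\<dots> = 1"
    by (simp add: sum.delta)
  finally show ?thesis
    by simp
qed

section \<open>The sets \<open>Q\<^sub>N\<close> and the cutoff \<open>N\<^sub>m\<close>\<close>

lemma QN_digit_support_ne_empty: "k \<in> QN s N \<Longrightarrow> digit_support s k \<noteq> {}"
  by (simp add: QN_def digit_support_eq_empty_iff)

lemma QN_subset_PiE_dflt: "QN s N \<subseteq> PiE_dflt {..<s} 0 (\<lambda>_. {..<2 ^ N})"
proof
  fix k assume k: "k \<in> QN s N"
  have "k j < 2 ^ N" if "j < s" for j
  proof (rule less_exp_if_digits_le)
    fix l assume "l \<in> digit_set (k j)"
    with \<open>j < s\<close> have "l \<le> kappa_norm s k"
      by (intro digit_le_kappa_norm) (simp add: digit_support_def)
    with k show "l \<le> N"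
      by (simp add: QN_def)
  qed
  with k show "k \<in> PiE_dflt {..<s} 0 (\<lambda>_. {..<2 ^ N})"
    by (auto simp: PiE_dflt_def QN_def)
qed

lemma finite_QN: "finite (QN s N)"
  using QN_subset_PiE_dflt by (rule finite_subset) auto

lemma QN_0: "QN s 0 = {}"
proof (intro equals0I)
  fix k assume k: "k \<in> QN s 0"
  then obtain j l where "(j, l) \<in> digit_support s k"
    using QN_digit_support_ne_empty [OF k] by auto
  then have "1 \<le> l" "l \<le> kappa_norm s k"
    by (auto simp: digit_support_def digit_set_def intro: digit_le_kappa_norm)
  with k show False
    by (simp add: QN_def)
qed

text \<open>\<open>Q\<^sub>N\<close> contains the vectors \<open>(2\<^sup>i, 0, \<dots>, 0)\<close>, \<open>i < N\<close>, of norm \<open>i + 1\<close>.\<close>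
lemma card_QN_ge:
  assumes "1 \<le> s"
  shows "N \<le> card (QN s N)"
proof -
  define e where "e i = (\<lambda>j::nat. if j = 0 then 2 ^ i else 0 :: nat)" for i :: nat
  have "digit_support s (e i) = {(0, Suc i)}" for i
    using assms by (auto simp: digit_support_def e_def digit_set_exp split: if_splits)
  then have "kappa_norm s (e i) = Suc i" for i
    by (simp add: kappa_norm_eq_sum_digit_support)
  with assms have "e ` {..<N} \<subseteq> QN s N"
    by (auto simp: QN_def e_def fun_eq_iff)
  moreover have "inj_on e {..<N}"
    by (auto simp: inj_on_def e_def fun_eq_iff)
  ultimately show ?thesis
    using card_inj_on_le [OF _ _ finite_QN] by fastforce
qed

lemma card_QN_Nm_le:
  assumes "1 \<le> s" "0 < c"
  shows "real (card (QN s (Nm s c m))) \<le> c * real m * 2 ^ m"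
proof -
  define S where "S = {N. real (card (QN s N)) \<le> c * real m * 2 ^ m}"
  have "0 \<in> S"
    using assms by (simp add: S_def QN_0)
  moreover have "S \<subseteq> {..nat \<lceil>c * real m * 2 ^ m\<rceil>}"
  proof
    fix N assume "N \<in> S"
    with card_QN_ge [OF assms(1), of N] have "real N \<le> c * real m * 2 ^ m"
      by (simp add: S_def)
    then show "N \<in> {..nat \<lceil>c * real m * 2 ^ m\<rceil>}"
      by (simp, linarith)
  qed
  then have "finite S"
    by (rule finite_subset) simp
  ultimately have "Sup S \<in> S"
    by (auto simp: Sup_nat_def)
  then show ?thesis
    by (simp add: Nm_def S_def)
qed

theorem lemma4:
  fixes s m :: nat and c :: real
  assumes "1 \<le> s" and "0 < c" and "1 \<le> m"
  shows "measure random_design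
           {C \<in> space random_design.
              2 * c * real m \<le> real (\<Sum>k\<in>QN s (Nm s c m). of_bool (Zind s m k C))}
         \<le> 1 / (c * real m)"
proof -
  interpret prob_space random_design
    by (rule prob_space_random_design)
  let ?K = "QN s (Nm s c m)"
  show ?thesis
    unfolding mult.assoc
  proof (rule pairwise_independent_count_tail)
    show "finite ?K"
      by (rule finite_QN)
    show "prob {C \<in> space random_design. Zind s m k C} = (1/2) ^ m" if "k \<in> ?K" for k
      using that by (intro prob_Zind QN_digit_support_ne_empty)
    show "prob {C \<in> space random_design. Zind s m k C \<and> Zind s m k' C} = ((1/2) ^ m)\<^sup>2"
      if "k \<in> ?K" "k' \<in> ?K" "k \<noteq> k'" for k k'
    proof -
      have "digit_support s k \<noteq> digit_support s k'"
        using that digit_support_inject [of s k k'] by (auto simp: QN_def)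
      with that show ?thesis
        by (intro prob_Zind_pair QN_digit_support_ne_empty)
    qed
    show "real (card ?K) * (1/2) ^ m \<le> c * real m"
      using card_QN_Nm_le [OF assms(1,2), of m] by (simp add: field_simps)
    show "0 < c * real m"
      using assms by simp
  qed simp
qed

end
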